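(* Let $\Sigma$ be a finite set of tokens, $c$ a context, $M_1,M_2$ language models, $f$ a min-bounded function with constant $\lambda_f$, $M=DAGG_f(M_1,M_2)$, and $t\in\Sigma$ a token. Then $t$ is $\le\gamma$-exposed by $M$ over $M_1$ at $c$ and $\le\gamma$-exposed by $M$ over $M_2$ at $c$, where $$\gamma=\lambda_f\,\overline{f_c}(M_1,M_2)\le\lambda_f\sqrt{MAE_c(M_1,M_2)}.$$
   Context: Let $n=|\Sigma|$. A context is a finite sequence of tokens from $\Sigma$. A language model $M$ assigns to every context $c$ and token $t\in\Sigma$ a probability $p_M(t\mid c)>0$, with $\sum_{t\in\Sigma}p_M(t\mid c)=1$. For $g:\Sigma\to\mathbb{R}_{>0}$, $GM(g(t)):=\exp\big(\tfrac1n\sum_{t\in\Sigma}\log g(t)\big)$. Typical probability: $tp_c(M):=GM(p_M(t\mid c))$; relative probability: $rp_M(t\mid c):=p_M(t\mid c)/tp_c(M)$. Typical probability ratio: $tpr_c(M_1,M_2):=GM\big(\tfrac{p_{M_1}(t\mid c)}{p_{M_2}(t\mid c)}\big)$. A token $t$ is $\alpha$-exposed by $M_1$ over $M_2$ at $c$ if $\frac{p_{M_1}(t\mid c)}{p_{M_2}(t\mid c)\cdot tpr_c(M_1,M_2)}=\alpha$; it is $\le\alpha$-exposed if it is $\beta$-exposed for some $\beta\le\alpha$. A function $f:\mathbb{R}_{>0}^2\to\mathbb{R}_{>0}$ is proper-avg if $\min(x,y)\le f(x,y)\le\max(x,y)$ for all $x,y>0$; it is min-bounded if it is proper-avg and there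 is a constant $\lambda_f$ with $f(x,y)\le\lambda_f\min(x,y)$ for all $x,y>0$. Set $M(t\mid c):=f(rp_{M_1}(t\mid c),rp_{M_2}(t\mid c))$; $DAGG_f(M_1,M_2)$ is the language model $M$ with $p_M(t\mid c):=\frac{M(t\mid c)}{\sum_{t'\in\Sigma}M(t'\mid c)}$. Define $\overline{f_c}(M_1,M_2):=GM\big(M(t\mid c)^{-1}\big)$ and $MAE_c(M_1,M_2):=GM\Big(\max\Big(\tfrac{rp_{M_1}(t\mid c)}{rp_{M_2}(t\mid c)},\tfrac{rp_{M_2}(t\mid c)}{rp_{M_1}(t\mid c)}\Big)\Big)$. *)

theory Defs
  imports Complex_Main
begin

text \<open>Tokens form a finite type 't (so Sigma = UNIV, n = CARD('t)); contexts are
  finite token lists; a language model maps a context and a token to a probability.\<close>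

type_synonym 't lm = "'t list \<Rightarrow> 't \<Rightarrow> real"

definition is_lm :: "('t::finite) lm \<Rightarrow> bool" where
  "is_lm M \<longleftrightarrow> (\<forall>c t. M c t > 0) \<and> (\<forall>c. (\<Sum>t\<in>UNIV. M c t) = 1)"

definition GM :: "(('t::finite) \<Rightarrow> real) \<Rightarrow> real" where
  "GM g = exp ((1 / real (card (UNIV :: 't set))) * (\<Sum>t\<in>UNIV. ln (g t)))"

definition tp :: "('t::finite) lm \<Rightarrow> 't list \<Rightarrow> real" where
  "tp M c = GM (\<lambda>t. M c t)"

definition rp :: "('t::finite) lm \<Rightarrow> 't list \<Rightarrow> 't \<Rightarrow> real" where
  "rp M c t = M c t / tp M c"

definition tpr :: "('t::finite) lm \<Rightarrow> 't lm \<Rightarrow> 't list \<Rightarrow> real" where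
  "tpr M1 M2 c = GM (\<lambda>t. M1 c t / M2 c t)"

definition exposed :: "('t::finite) lm \<Rightarrow> 't lm \<Rightarrow> 't list \<Rightarrow> 't \<Rightarrow> real \<Rightarrow> bool" where
  "exposed M1 M2 c t \<alpha> \<longleftrightarrow> M1 c t / (M2 c t * tpr M1 M2 c) = \<alpha>"

definition le_exposed :: "('t::finite) lm \<Rightarrow> 't lm \<Rightarrow> 't list \<Rightarrow> 't \<Rightarrow> real \<Rightarrow> bool" where
  "le_exposed M1 M2 c t \<alpha> \<longleftrightarrow> (\<exists>\<beta>. \<beta> \<le> \<alpha> \<and> exposed M1 M2 c t \<beta>)"

definition proper_avg :: "(real \<Rightarrow> real \<Rightarrow> real) \<Rightarrow> bool" where
  "proper_avg f \<longleftrightarrow> (\<forall>x y. x > 0 \<longrightarrow> y > 0 \<longrightarrow> min x y \<le> f x y \<and> f x y \<le> max x y)"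

definition min_bounded :: "(real \<Rightarrow> real \<Rightarrow> real) \<Rightarrow> real \<Rightarrow> bool" where
  "min_bounded f lam \<longleftrightarrow> proper_avg f \<and> (\<forall>x y. x > 0 \<longrightarrow> y > 0 \<longrightarrow> f x y \<le> lam * min x y)"

definition Mval :: "(real \<Rightarrow> real \<Rightarrow> real) \<Rightarrow> ('t::finite) lm \<Rightarrow> 't lm \<Rightarrow> 't list \<Rightarrow> 't \<Rightarrow> real" where
  "Mval f M1 M2 c t = f (rp M1 c t) (rp M2 c t)"

definition DAGG :: "(real \<Rightarrow> real \<Rightarrow> real) \<Rightarrow> ('t::finite) lm \<Rightarrow> 't lm \<Rightarrow> 't lm" where
  "DAGG f M1 M2 c t = Mval f M1 M2 c t / (\<Sum>t'\<in>UNIV. Mval f M1 M2 c t')"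

definition fbar :: "(real \<Rightarrow> real \<Rightarrow> real) \<Rightarrow> ('t::finite) lm \<Rightarrow> 't lm \<Rightarrow> 't list \<Rightarrow> real" where
  "fbar f M1 M2 c = GM (\<lambda>t. inverse (Mval f M1 M2 c t))"

definition MAE :: "('t::finite) lm \<Rightarrow> 't lm \<Rightarrow> 't list \<Rightarrow> real" where
  "MAE M1 M2 c = GM (\<lambda>t. max (rp M1 c t / rp M2 c t) (rp M2 c t / rp M1 c t))"

end

theory Submission
  imports Defs
begin

text \<open>The typical probability ratio of two models is the quotient of their typical
  probabilities, so the exposure of \<open>t\<close> by \<open>D\<close> over \<open>M\<close> is just
  \<open>rp\<^sub>D(t) / rp\<^sub>M(t)\<close>. Relative probabilities ignore normalisation, hence for
  \<open>D = DAGG\<^sub>f(M\<^sub>1, M\<^sub>2)\<close> we get \<open>rp\<^sub>D(t) = M(t) \<cdot> fbar\<^sub>c\<close>, and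
  min-boundedness gives \<open>M(t) \<le> \<lambda>\<^sub>f rp\<^sub>i(t)\<close> for \<open>i = 1, 2\<close>.
  For the bound on \<open>fbar\<^sub>c\<close>, proper averaging gives
  \<open>1 / M(t) \<le> 1 / min(rp\<^sub>1(t), rp\<^sub>2(t))\<close>, whose square is
  \<open>max(rp\<^sub>1/rp\<^sub>2, rp\<^sub>2/rp\<^sub>1) / (rp\<^sub>1 rp\<^sub>2)\<close>; the geometric mean is multiplicative
  and relative probabilities have geometric mean 1.\<close>

lemma GM_pos: "0 < GM g"
  by (simp add: GM_def)

lemma GM_mult:
  fixes g h :: "'t::finite \<Rightarrow> real"
  assumes "\<And>t. 0 < g t" "\<And>t. 0 < h t"
  shows "GM (\<lambda>t. g t * h t) = GM g * GM h"
proof -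
  have "(\<Sum>t\<in>UNIV. ln (g t * h t)) = (\<Sum>t\<in>UNIV. ln (g t)) + (\<Sum>t\<in>UNIV. ln (h t))"
    using assms by (simp add: ln_mult sum.distrib[symmetric] less_imp_neq[symmetric])
  then show ?thesis
    by (simp add: GM_def distrib_left exp_add)
qed

lemma GM_inverse:
  fixes g :: "'t::finite \<Rightarrow> real"
  assumes "\<And>t. 0 < g t"
  shows "GM (\<lambda>t. inverse (g t)) = inverse (GM g)"
proof -
  have "(\<Sum>t\<in>UNIV. ln (inverse (g t))) = - (\<Sum>t\<in>UNIV. ln (g t))"
    using assms by (simp add: ln_inverse sum_negf)
  then show ?thesis
    by (simp add: GM_def exp_minus)
qed

lemma GM_divide:
  fixes g h :: "'t::finite \<Rightarrow> real"
  assumes "\<And>t. 0 < g t" "\<And>t. 0 < h t"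
  shows "GM (\<lambda>t. g t / h t) = GM g / GM h"
  using GM_mult[of g "\<lambda>t. inverse (h t)"] assms by (simp add: GM_inverse divide_inverse)

lemma GM_const:
  assumes "0 < k"
  shows "GM (\<lambda>t::'t::finite. k) = k"
  using assms by (simp add: GM_def)

lemma GM_power2:
  fixes g :: "'t::finite \<Rightarrow> real"
  assumes "\<And>t. 0 < g t"
  shows "GM (\<lambda>t. (g t)\<^sup>2) = (GM g)\<^sup>2"
  using GM_mult[of g g] assms by (simp add: power2_eq_square)

lemma GM_mono:
  fixes g h :: "'t::finite \<Rightarrow> real"
  assumes "\<And>t. 0 < g t" "\<And>t. g t \<le> h t"
  shows "GM g \<le> GM h"
proof -
  have "(\<Sum>t\<in>UNIV. ln (g t)) \<le> (\<Sum>t\<in>UNIV. ln (h t))"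
    using assms by (intro sum_mono) (meson ln_le_cancel_iff order_less_le_trans)
  then show ?thesis
    unfolding GM_def by (intro exp_mono mult_left_mono) auto
qed

lemma rp_pos:
  assumes "\<And>t. 0 < M c t"
  shows "0 < rp M c t"
  using assms by (simp add: rp_def tp_def GM_pos)

lemma GM_rp:
  assumes "\<And>t. 0 < M c t"
  shows "GM (rp M c) = 1"
proof -
  have "rp M c = (\<lambda>t. M c t / tp M c)"
    by (simp add: rp_def fun_eq_iff)
  then show ?thesis
    using GM_divide[of "M c" "\<lambda>_. tp M c"] assms
    by (simp add: tp_def GM_const GM_pos less_imp_neq[symmetric])
qed

lemma tpr_eq_tp_divide:
  assumes "\<And>t. 0 < M1 c t" "\<And>t. 0 < M2 c t"
  shows "tpr M1 M2 c = tp M1 c / tp M2 c"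
  using assms by (simp add: tpr_def tp_def GM_divide)

lemma le_exposed_iff_rp_ratio:
  assumes "\<And>t. 0 < M1 c t" "\<And>t. 0 < M2 c t"
  shows "le_exposed M1 M2 c t \<alpha> \<longleftrightarrow> rp M1 c t / rp M2 c t \<le> \<alpha>"
proof -
  have "0 < M2 c t" "0 < tp M1 c" "0 < tp M2 c"
    using assms by (simp_all add: tp_def GM_pos)
  then have "M1 c t / (M2 c t * tpr M1 M2 c) = rp M1 c t / rp M2 c t"
    using assms by (simp add: tpr_eq_tp_divide rp_def field_simps)
  then show ?thesis
    by (auto simp: le_exposed_def exposed_def)
qed

lemma min_bounded_ge_1:
  assumes "min_bounded f lam"
  shows "1 \<le> lam"
  using assms unfolding min_bounded_def proper_avg_def
  by (metis min.idem mult.right_neutral order_trans zero_less_one)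

lemma Mval_pos:
  assumes "proper_avg f" "\<And>t. 0 < M1 c t" "\<And>t. 0 < M2 c t"
  shows "0 < Mval f M1 M2 c t"
  using assms rp_pos[of M1 c t] rp_pos[of M2 c t]
  unfolding proper_avg_def Mval_def by (metis min_less_iff_conj order_less_le_trans)

lemma Mval_le_rp:
  assumes "min_bounded f lam" "\<And>t. 0 < M1 c t" "\<And>t. 0 < M2 c t" "M \<in> {M1, M2}"
  shows "Mval f M1 M2 c t \<le> lam * rp M c t"
proof -
  have "Mval f M1 M2 c t \<le> lam * min (rp M1 c t) (rp M2 c t)"
    using assms(1-3) rp_pos[of M1 c t] rp_pos[of M2 c t]
    by (simp add: min_bounded_def Mval_def)
  also have "\<dots> \<le> lam * rp M c t"
    using assms(4) min_bounded_ge_1[OF assms(1)] by (auto intro: mult_left_mono)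
  finally show ?thesis .
qed

lemma rp_DAGG:
  assumes "proper_avg f" "\<And>t. 0 < M1 c t" "\<And>t. 0 < M2 c t"
  shows "rp (DAGG f M1 M2) c t = Mval f M1 M2 c t * fbar f M1 M2 c"
proof -
  define V where "V = Mval f M1 M2 c"
  define S where "S = (\<Sum>t'\<in>UNIV. V t')"
  have V_pos: "\<And>t. 0 < V t"
    unfolding V_def using assms by (rule Mval_pos)
  then have "0 < S"
    unfolding S_def by (simp add: sum_pos)
  then have "tp (DAGG f M1 M2) c = GM V / S"
    using GM_divide[of V "\<lambda>_. S"] V_pos
    by (simp add: tp_def DAGG_def V_def S_def GM_const)
  then show ?thesis
    using \<open>0 < S\<close> V_pos
    by (simp add: rp_def DAGG_def fbar_def GM_inverse flip: V_def S_def) (simp add: divide_inverse)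
qed

lemma DAGG_pos:
  assumes "proper_avg f" "\<And>t. 0 < M1 c t" "\<And>t. 0 < M2 c t"
  shows "0 < DAGG f M1 M2 c t"
  using Mval_pos[of f M1 c M2, OF assms] by (simp add: DAGG_def sum_pos)

lemma le_exposed_DAGG:
  assumes "min_bounded f lam" "\<And>t. 0 < M1 c t" "\<And>t. 0 < M2 c t" "M \<in> {M1, M2}"
  shows "le_exposed (DAGG f M1 M2) M c t (lam * fbar f M1 M2 c)"
proof -
  have avg: "proper_avg f"
    using assms(1) by (simp add: min_bounded_def)
  have M_pos: "\<And>t. 0 < M c t"
    using assms(2-4) by auto
  have D_pos: "\<And>t. 0 < DAGG f M1 M2 c t"
    using avg assms(2,3) by (rule DAGG_pos)
  have "0 < fbar f M1 M2 c"
    by (simp add: fbar_def GM_pos)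
  then have "Mval f M1 M2 c t * fbar f M1 M2 c \<le> lam * rp M c t * fbar f M1 M2 c"
    using Mval_le_rp[of f lam M1 c M2, OF assms] by simp
  moreover have "rp (DAGG f M1 M2) c t = Mval f M1 M2 c t * fbar f M1 M2 c"
    using avg assms(2,3) by (rule rp_DAGG)
  ultimately have "rp (DAGG f M1 M2) c t / rp M c t \<le> lam * fbar f M1 M2 c"
    using rp_pos[of M c t, OF M_pos] by (simp add: field_simps)
  then show ?thesis
    using le_exposed_iff_rp_ratio[of "DAGG f M1 M2" c M, OF D_pos M_pos] by blast
qed

lemma inverse_min_square:
  fixes a b :: real
  assumes "0 < a" "0 < b"
  shows "(inverse (min a b))\<^sup>2 = max (a / b) (b / a) * inverse (a * b)"
proof (cases "a \<le> b")
  case True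
  then have "a / b \<le> b / a"
    using assms by (simp add: divide_simps power2_eq_square[symmetric] power_mono)
  then show ?thesis
    using True assms by (simp add: field_simps power2_eq_square)
next
  case False
  then have "b / a \<le> a / b"
    using assms by (simp add: divide_simps power2_eq_square[symmetric] power_mono)
  then show ?thesis
    using False assms by (simp add: field_simps power2_eq_square)
qed

lemma fbar_le_sqrt_MAE:
  assumes "proper_avg f" "\<And>t. 0 < M1 c t" "\<And>t. 0 < M2 c t"
  shows "fbar f M1 M2 c \<le> sqrt (MAE M1 M2 c)"
proof -
  let ?r1 = "rp M1 c" and ?r2 = "rp M2 c"
  have r1: "\<And>t. 0 < ?r1 t" and r2: "\<And>t. 0 < ?r2 t"
    using assms(2,3) by (simp_all add: rp_pos)
  have "fbar f M1 M2 c \<le> GM (\<lambda>t. inverse (min (?r1 t) (?r2 t)))"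
    unfolding fbar_def
  proof (rule GM_mono)
    fix t
    show "0 < inverse (Mval f M1 M2 c t)"
      using Mval_pos[of f M1 c M2, OF assms] by simp
    show "inverse (Mval f M1 M2 c t) \<le> inverse (min (?r1 t) (?r2 t))"
      using assms(1) r1[of t] r2[of t]
      by (intro le_imp_inverse_le) (simp_all add: proper_avg_def Mval_def)
  qed
  also have "GM (\<lambda>t. inverse (min (?r1 t) (?r2 t))) = sqrt (MAE M1 M2 c)"
  proof -
    have "(GM (\<lambda>t. inverse (min (?r1 t) (?r2 t))))\<^sup>2
        = GM (\<lambda>t. (inverse (min (?r1 t) (?r2 t)))\<^sup>2)"
      using r1 r2 by (simp add: GM_power2)
    also have "\<dots> = GM (\<lambda>t. max (?r1 t / ?r2 t) (?r2 t / ?r1 t) * inverse (?r1 t * ?r2 t))"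
      using r1 r2 by (simp only: inverse_min_square)
    also have "\<dots> = MAE M1 M2 c * (inverse (GM ?r1 * GM ?r2))"
      using r1 r2 by (simp add: MAE_def GM_mult GM_inverse less_max_iff_disj)
    also have "\<dots> = MAE M1 M2 c"
      using assms(2,3) by (simp add: GM_rp)
    finally show ?thesis
      by (metis GM_pos less_imp_le real_sqrt_unique)
  qed
  finally show ?thesis .
qed

theorem theorem2:
  fixes M1 M2 :: "('t::finite) lm" and f :: "real \<Rightarrow> real \<Rightarrow> real"
    and lam :: real and c :: "'t list" and t :: 't
  assumes "is_lm M1" and "is_lm M2" and "min_bounded f lam"
  shows "le_exposed (DAGG f M1 M2) M1 c t (lam * fbar f M1 M2 c)
       \<and> le_exposed (DAGG f M1 M2) M2 c t (lam * fbar f M1 M2 c)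
       \<and> lam * fbar f M1 M2 c \<le> lam * sqrt (MAE M1 M2 c)"
proof -
  have pos1: "\<And>t. 0 < M1 c t" and pos2: "\<And>t. 0 < M2 c t"
    using assms(1,2) by (simp_all add: is_lm_def)
  have "proper_avg f"
    using assms(3) by (simp add: min_bounded_def)
  then have "fbar f M1 M2 c \<le> sqrt (MAE M1 M2 c)"
    using pos1 pos2 by (rule fbar_le_sqrt_MAE)
  moreover have "0 \<le> lam"
    using min_bounded_ge_1[OF assms(3)] by simp
  ultimately show ?thesis
    using le_exposed_DAGG[of f lam M1 c M2, OF assms(3) pos1 pos2] by (simp add: mult_left_mono)
qed

end
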